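(* Let $\Pi$ be a projective plane of order $q^2$ and let $\phi$ be an embedding of the complete bipartite graph $K_{q^2,q^2}$ into $\Pi$. Then for every Baer subplane $\pi$ of $\Pi$, at least $q$ of the lines of $\Pi$ onto which edges of $K_{q^2,q^2}$ are mapped are lines of $\pi$.
   Context: A finite projective plane of order $Q$ has $Q^2+Q+1$ points and lines, $Q+1$ points on each line and $Q+1$ lines through each point; any two distinct points lie on a unique line and any two lines meet in a unique point. A Baer subplane of a plane of order $q^2$ is a set of points and lines of the plane forming a projective plane of order $q$ under the inherited incidence; its lines are lines of $\Pi$. An embedding of a simple graph $G=(V,E)$ into $\Pi$ is an injective map $\phi$ from $V$ to the points of $\Pi$ such that the induced map $\overline{\phi}$ sending an edge $ab$ to the line through $\phi(a),\phi(b)$ is injective on $E$; the lines $\overline{\phi}(E)$ are the embedded edges. *)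

theory Defs
  imports Main
begin

definition projective_plane ::
  "'p set \<Rightarrow> 'l set \<Rightarrow> ('p \<Rightarrow> 'l \<Rightarrow> bool) \<Rightarrow> nat \<Rightarrow> bool" where
  "projective_plane P L I n \<longleftrightarrow>
     n \<ge> 2 \<and> finite P \<and> finite L \<and>
     card P = n^2 + n + 1 \<and> card L = n^2 + n + 1 \<and>
     (\<forall>l\<in>L. card {p\<in>P. I p l} = n + 1) \<and>
     (\<forall>p\<in>P. card {l\<in>L. I p l} = n + 1) \<and>
     (\<forall>p\<in>P. \<forall>r\<in>P. p \<noteq> r \<longrightarrow> (\<exists>!l. l \<in> L \<and> I p l \<and> I r l)) \<and>
     (\<forall>l\<in>L. \<forall>m\<in>L. l \<noteq> m \<longrightarrow> (\<exists>!p. p \<in> P \<and> I p l \<and> I p m))"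

definition baer_subplane ::
  "'p set \<Rightarrow> 'l set \<Rightarrow> ('p \<Rightarrow> 'l \<Rightarrow> bool) \<Rightarrow> nat \<Rightarrow> 'p set \<Rightarrow> 'l set \<Rightarrow> bool" where
  "baer_subplane P L I q P' L' \<longleftrightarrow>
     P' \<subseteq> P \<and> L' \<subseteq> L \<and> projective_plane P' L' I q"

definition edge_line ::
  "'l set \<Rightarrow> ('p \<Rightarrow> 'l \<Rightarrow> bool) \<Rightarrow> ('v \<Rightarrow> 'p) \<Rightarrow> 'v set \<Rightarrow> 'l" where
  "edge_line L I phi e = (THE l. l \<in> L \<and> (\<forall>x\<in>e. I (phi x) l))"

text \<open>Embedding of a simple graph (V, E), edges given as 2-element sets of vertices.\<close>
definition graph_embedding ::
  "'p set \<Rightarrow> 'l set \<Rightarrow> ('p \<Rightarrow> 'l \<Rightarrow> bool) \<Rightarrow> 'v set \<Rightarrow> 'v set set \<Rightarrow> ('v \<Rightarrow> 'p) \<Rightarrow> bool" where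
  "graph_embedding P L I V E phi \<longleftrightarrow>
     phi ` V \<subseteq> P \<and> inj_on phi V \<and> inj_on (edge_line L I phi) E"

definition embedded_edges ::
  "'l set \<Rightarrow> ('p \<Rightarrow> 'l \<Rightarrow> bool) \<Rightarrow> 'v set set \<Rightarrow> ('v \<Rightarrow> 'p) \<Rightarrow> 'l set" where
  "embedded_edges L I E phi = edge_line L I phi ` E"

definition Kbip_V :: "nat \<Rightarrow> (nat + nat) set" where
  "Kbip_V n = Inl ` {..<n} \<union> Inr ` {..<n}"

definition Kbip_E :: "nat \<Rightarrow> (nat + nat) set set" where
  "Kbip_E n = {{Inl i, Inr j} | i j. i < n \<and> j < n}"

end

theory Submission
  imports Defs
begin

text \<open>The q^4 edges of K_{q^2,q^2} go to q^4 distinct lines, so only q^2 + 1 of the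
q^4 + q^2 + 1 lines of the plane carry no edge. A Baer subplane has q^2 + q + 1 lines,
hence at least q of them carry edges.\<close>

lemma card_Kbip_E: "card (Kbip_E n) = n^2"
proof -
  have "Kbip_E n = (\<lambda>(i, j). {Inl i, Inr j}) ` ({..<n} \<times> {..<n})"
    unfolding Kbip_E_def by auto
  moreover have "inj_on (\<lambda>(i, j). {Inl i, Inr j} :: (nat + nat) set) ({..<n} \<times> {..<n})"
    by (auto simp: inj_on_def doubleton_eq_iff)
  ultimately show ?thesis
    by (simp add: card_image card_cartesian_product power2_eq_square)
qed

lemma Kbip_E_edge:
  assumes "e \<in> Kbip_E n"
  obtains a b where "e = {a, b}" "a \<in> Kbip_V n" "b \<in> Kbip_V n" "a \<noteq> b"
  using assms unfolding Kbip_E_def Kbip_V_def by blast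

lemma edge_line_mem:
  assumes "projective_plane P L I n"
    and "graph_embedding P L I V E phi"
    and "a \<in> V" "b \<in> V" "a \<noteq> b"
  shows "edge_line L I phi {a, b} \<in> L"
proof -
  have "phi a \<in> P" "phi b \<in> P" "phi a \<noteq> phi b"
    using assms(2-5) unfolding graph_embedding_def inj_on_def by auto
  then have "\<exists>!l. l \<in> L \<and> I (phi a) l \<and> I (phi b) l"
    using assms(1) unfolding projective_plane_def by blast
  then have "\<exists>!l. l \<in> L \<and> (\<forall>x\<in>{a, b}. I (phi x) l)"
    by simp
  from theI'[OF this] show ?thesis
    unfolding edge_line_def by blast
qed

lemma embedded_edges_subset_lines:
  assumes "projective_plane P L I n"
    and "graph_embedding P L I V E phi"
    and "\<And>e. e \<in> E \<Longrightarrow> \<exists>a\<in>V. \<exists>b\<in>V. a \<noteq> b \<and> e = {a, b}"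
  shows "embedded_edges L I E phi \<subseteq> L"
proof
  fix l assume "l \<in> embedded_edges L I E phi"
  then obtain e where "e \<in> E" "l = edge_line L I phi e"
    unfolding embedded_edges_def by blast
  with assms(3) obtain a b where "a \<in> V" "b \<in> V" "a \<noteq> b" "l = edge_line L I phi {a, b}"
    by blast
  then show "l \<in> L"
    using edge_line_mem[OF assms(1,2)] by blast
qed

lemma card_embedded_edges:
  assumes "graph_embedding P L I V E phi"
  shows "card (embedded_edges L I E phi) = card E"
  using assms unfolding graph_embedding_def embedded_edges_def by (simp add: card_image)

theorem corollary4p13:
  fixes P :: "'p set" and L :: "'l set" and I :: "'p \<Rightarrow> 'l \<Rightarrow> bool"
    and q :: nat and phi :: "nat + nat \<Rightarrow> 'p"
  assumes "projective_plane P L I (q^2)"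
    and "graph_embedding P L I (Kbip_V (q^2)) (Kbip_E (q^2)) phi"
    and "baer_subplane P L I q P' L'"
  shows "card (L' \<inter> embedded_edges L I (Kbip_E (q^2)) phi) \<ge> q"
proof -
  let ?Em = "embedded_edges L I (Kbip_E (q^2)) phi"
  have "finite L" and card_L: "card L = (q^2)^2 + q^2 + 1"
    using assms(1) unfolding projective_plane_def by auto
  have "L' \<subseteq> L" and card_L': "card L' = q^2 + q + 1"
    using assms(3) unfolding baer_subplane_def projective_plane_def by auto
  have "?Em \<subseteq> L"
    using embedded_edges_subset_lines[OF assms(1,2)] by (meson Kbip_E_edge)
  have card_Em: "card ?Em = (q^2)^2"
    using card_embedded_edges[OF assms(2)] card_Kbip_E by simp
  have "card L' + card ?Em = card (L' \<union> ?Em) + card (L' \<inter> ?Em)"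
    using \<open>finite L\<close> \<open>L' \<subseteq> L\<close> \<open>?Em \<subseteq> L\<close> by (intro card_Un_Int) (auto intro: finite_subset)
  moreover have "card (L' \<union> ?Em) \<le> card L"
    using \<open>finite L\<close> \<open>L' \<subseteq> L\<close> \<open>?Em \<subseteq> L\<close> by (intro card_mono) auto
  ultimately show ?thesis
    using card_L card_L' card_Em by linarith
qed

end
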